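(* Let $(X_k)_{k\ge1}$ be nonnegative interarrival times with $S_k=X_1+\dots+X_k$, counting process $N(t)=\max\{k:S_k\le t\}$, and let $T$ be a nonnegative random variable independent of $(X_k)$. Assume: (a) $T$ is DFR; (b) $T$ and $X_1$ do not have $0$ as a common discontinuity point (i.e. not both $P(T=0)>0$ and $P(X_1=0)>0$); (c) $(X_1,X_2)$ is associated and $X_2\le_{ST}X_1$; (d) for every $n=1,2,\dots$ there exists an $N_n$-distributional version $\{(Z^{\mathbf x}_{n+1},Z^{\mathbf x}_{n+2}):\mathbf x\in N_n\}$ of $(X_{n+1},X_{n+2})$ given $(X_1,\dots,X_n)$ such that, for all $\mathbf x\in N_n$, $(Z^{\mathbf x}_{n+1},Z^{\mathbf x}_{n+2})$ is associated and $Z^{\mathbf x}_{n+2}\le_{ST}Z^{\mathbf x}_{n+1}$. Then $N(T)$ is discrete DFR.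
   Context: A random vector $\mathbf Y$ is associated if $\mathrm{Cov}(f(\mathbf Y),g(\mathbf Y))\ge0$ for all coordinatewise increasing $f,g$ for which the expectations exist. A survival function $\overline G$ is DFR if $t\mapsto\overline G(z+t)/\overline G(t)$ is increasing for every $z\ge0$. $X\le_{ST}Y$ means $P(X>t)\le P(Y>t)$ for all $t$. A $\{0,1,\dots\}$-valued $N$ is discrete DFR if $P(N\ge n+1)^2\le P(N\ge n)P(N\ge n+2)$ for all $n\ge0$. Let $F_n$ be the law of $(X_1,\dots,X_n)$ and $N_n\subseteq\mathbb R_+^n$ Borel with $P((X_1,\dots,X_n)\in N_n)=1$. A family $\{\mu^{\mathbf x}:\mathbf x\in N_n\}$ of probability measures on $\mathbb R_+^2$, with $\mathbf x\mapsto\mu^{\mathbf x}(B)$ measurable, is an $N_n$ regular conditional distribution of $(X_{n+1},X_{n+2})$ given $(X_1,\dots,X_n)$ if $P((X_1,\dots,X_n)\in A,(X_{n+1},X_{n+2})\in B)=\int_A\mu^{\mathbf x}(B)\,dF_n(\mathbf x)$ for all Borel $A\subseteq N_n$, $B\subseteq\mathbb R_+^2$; an $N_n$-distributional version is a family of random vectors $(Z^{\mathbf x}_{n+1},Z^{\mathbf x}_{n+2})$ with law $\mu^{\mathbf x}$ for such a regular conditional distribution. *)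

theory Defs
  imports "HOL-Probability.Probability"
begin

definition coord_incr :: "(real \<times> real \<Rightarrow> real) \<Rightarrow> bool" where
  "coord_incr f \<longleftrightarrow> (\<forall>a b c d. a \<le> c \<longrightarrow> b \<le> d \<longrightarrow> f (a, b) \<le> f (c, d))"

definition associated :: "'a measure \<Rightarrow> ('a \<Rightarrow> real \<times> real) \<Rightarrow> bool" where
  "associated M Y \<longleftrightarrow>
     (\<forall>f g. coord_incr f \<and> coord_incr g \<and>
        integrable M (\<lambda>w. f (Y w)) \<and> integrable M (\<lambda>w. g (Y w)) \<and>
        integrable M (\<lambda>w. f (Y w) * g (Y w)) \<longrightarrow>
        (\<integral>w. f (Y w) * g (Y w) \<partial>M) - (\<integral>w. f (Y w) \<partial>M) * (\<integral>w. g (Y w) \<partial>M) \<ge> 0)"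

definition st_le :: "'a measure \<Rightarrow> ('a \<Rightarrow> real) \<Rightarrow> ('a \<Rightarrow> real) \<Rightarrow> bool" where
  "st_le M Y Z \<longleftrightarrow> (\<forall>t. measure M {w\<in>space M. Y w > t} \<le> measure M {w\<in>space M. Z w > t})"

definition surv :: "'a measure \<Rightarrow> ('a \<Rightarrow> real) \<Rightarrow> real \<Rightarrow> real" where
  "surv M T t = measure M {w\<in>space M. T w > t}"

definition DFR :: "'a measure \<Rightarrow> ('a \<Rightarrow> real) \<Rightarrow> bool" where
  "DFR M T \<longleftrightarrow> (\<forall>z\<ge>0. mono_on {0..} (\<lambda>t. surv M T (z + t) / surv M T t))"

definition disc_DFR :: "'a measure \<Rightarrow> ('a \<Rightarrow> enat) \<Rightarrow> bool" where
  "disc_DFR M N \<longleftrightarrow> (\<forall>n::nat.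
     (measure M {w\<in>space M. N w \<ge> enat (n+1)})\<^sup>2 \<le>
       measure M {w\<in>space M. N w \<ge> enat n} * measure M {w\<in>space M. N w \<ge> enat (n+2)})"

definition partial_sum :: "(nat \<Rightarrow> 'a \<Rightarrow> real) \<Rightarrow> nat \<Rightarrow> 'a \<Rightarrow> real" where
  "partial_sum X k w = (\<Sum>i\<in>{1..k}. X i w)"

definition counting :: "(nat \<Rightarrow> 'a \<Rightarrow> real) \<Rightarrow> real \<Rightarrow> 'a \<Rightarrow> enat" where
  "counting X t w = Sup {enat k | k. partial_sum X k w \<le> t}"

abbreviation Rn :: "nat \<Rightarrow> (nat \<Rightarrow> real) measure" where
  "Rn n \<equiv> PiM {1..n} (\<lambda>_. (borel :: real measure))"

definition first_n :: "(nat \<Rightarrow> 'a \<Rightarrow> real) \<Rightarrow> nat \<Rightarrow> 'a \<Rightarrow> (nat \<Rightarrow> real)" where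
  "first_n X n w = (\<lambda>i\<in>{1..n}. X i w)"

definition quadrant :: "(real \<times> real) set" where
  "quadrant = {0..} \<times> {0..}"

text \<open>Nn regular conditional distribution mu of (X_{n+1},X_{n+2}) given (X_1,...,X_n).\<close>
definition is_rcd :: "'a measure \<Rightarrow> (nat \<Rightarrow> 'a \<Rightarrow> real) \<Rightarrow> nat \<Rightarrow> (nat \<Rightarrow> real) set
     \<Rightarrow> ((nat \<Rightarrow> real) \<Rightarrow> (real \<times> real) measure) \<Rightarrow> bool" where
  "is_rcd M X n Nn \<mu> \<longleftrightarrow>
     Nn \<in> sets (Rn n) \<and> Nn \<subseteq> {x. \<forall>i\<in>{1..n}. 0 \<le> x i} \<and>
     measure M {w\<in>space M. first_n X n w \<in> Nn} = 1 \<and>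
     (\<forall>x\<in>Nn. prob_space (\<mu> x) \<and> sets (\<mu> x) = sets (borel :: (real \<times> real) measure)
               \<and> emeasure (\<mu> x) quadrant = 1) \<and>
     (\<forall>B\<in>sets (borel :: (real \<times> real) measure). B \<subseteq> quadrant \<longrightarrow>
        (\<lambda>x. emeasure (\<mu> x) B) \<in> borel_measurable (restrict_space (Rn n) Nn)) \<and>
     (\<forall>A\<in>sets (Rn n). A \<subseteq> Nn \<longrightarrow>
       (\<forall>B\<in>sets (borel :: (real \<times> real) measure). B \<subseteq> quadrant \<longrightarrow>
          emeasure M {w\<in>space M. first_n X n w \<in> A \<and> (X (n+1) w, X (n+2) w) \<in> B}
          = (\<integral>\<^sup>+ x. indicator A x * emeasure (\<mu> x) B \<partial>(distr M (Rn n) (first_n X n)))))"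

end

theory Submission
  imports Defs
begin

(*
  Let g(u) = P(T >= u). Since N(t) >= k iff S_k <= t and T is independent of (X_k),
  a_k = P(S_k <= T) = E g(S_k).  The proof then has three ingredients:
  1. DFR makes the survival function of T log-convex; passing to left limits,
     g(s+a) g(s+b) <= g(s) g(s+a+b) for s, a, b >= 0.
  2. For a nonnegative associated pair (Y1,Y2) with Y2 <=st Y1 and s >= 0,
     (E g(s+Y1))^2 <= g(s) E g(s+Y1+Y2)   (stochastic order, association, step 1).
  3. For k = 0 apply 2 to (X_1,X_2) with s = 0.  For k >= 1 disintegrate the law of
     (X_1..X_k, X_{k+1}, X_{k+2}) along the given regular conditional distribution,
     apply 2 conditionally with s = x_1+...+x_k, and integrate the resulting pointwise
     inequality f1^2 <= f0 f2 using Cauchy-Schwarz.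
*)

text \<open>The function g(u) = P(T >= u). Since N(T) >= k iff S_k <= T, all tail probabilities
  of N(T) are expectations of g; the non-strict inequality is why g, not the survival
  function, appears.\<close>
definition tail_ge :: "'a measure \<Rightarrow> ('a \<Rightarrow> real) \<Rightarrow> real \<Rightarrow> real" where
  "tail_ge M T u = measure M {w\<in>space M. u \<le> T w}"

context prob_space begin

lemma surv_antimono:
  assumes [measurable]: "T \<in> borel_measurable M" and "t1 \<le> t2"
  shows "surv M T t2 \<le> surv M T t1"
  unfolding surv_def using assms(2) by (intro finite_measure_mono) auto

lemma tail_ge_antimono:
  assumes [measurable]: "T \<in> borel_measurable M" and "u \<le> v"
  shows "tail_ge M T v \<le> tail_ge M T u"
  unfolding tail_ge_def using assms(2) by (intro finite_measure_mono) auto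

lemma tail_ge_bounds: "0 \<le> tail_ge M T u" "tail_ge M T u \<le> 1"
  unfolding tail_ge_def by auto

lemma surv_left_limit:
  assumes [measurable]: "T \<in> borel_measurable M" and c: "0 < c"
  shows "(\<lambda>m. surv M T (u - c / real (Suc m))) \<longlonglongrightarrow> tail_ge M T u"
proof -
  let ?A = "\<lambda>m. {w\<in>space M. u - c / real (Suc m) < T w}"
  have "decseq ?A"
  proof (rule decseq_SucI)
    fix m
    have "c / real (Suc (Suc m)) \<le> c / real (Suc m)"
      using c by (intro divide_left_mono) auto
    then show "?A (Suc m) \<subseteq> ?A m" by auto
  qed
  moreover have "(\<Inter>m. ?A m) = {w\<in>space M. u \<le> T w}"
  proof safe
    fix w assume w: "w \<in> (\<Inter>m. ?A m)"
    show "u \<le> T w"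
    proof (rule ccontr)
      assume "\<not> u \<le> T w"
      then obtain m where "inverse (real (Suc m)) < (u - T w) / c"
        using c reals_Archimedean[of "(u - T w) / c"] by auto
      then have "c / real (Suc m) < u - T w" using c by (simp add: field_simps)
      moreover have "u - c / real (Suc m) < T w" using w by blast
      ultimately show False by linarith
    qed
  next
    fix w m assume "u \<le> T w"
    moreover have "0 < c / real (Suc m)" using c by simp
    ultimately show "u - c / real (Suc m) < T w" by linarith
  qed auto
  moreover have "?A m \<in> sets M" for m by measurable
  ultimately show ?thesis
    unfolding surv_def tail_ge_def by (intro finite_Lim_measure_decseq[THEN tendsto_eq_rhs]) auto
qed

lemma DFR_surv_log_supermodular:
  assumes T[measurable]: "T \<in> borel_measurable M" and D: "DFR M T"
    and t: "0 \<le> t" and a: "0 \<le> a" and b: "0 \<le> b"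
  shows "surv M T (t + a) * surv M T (t + b) \<le> surv M T t * surv M T (t + a + b)"
proof (cases "surv M T (t + a) = 0")
  case False
  then have pos_a: "0 < surv M T (t + a)"
    unfolding surv_def using measure_nonneg[of M] by (simp add: less_le)
  have pos_0: "0 < surv M T t"
    using pos_a surv_antimono[OF T, of t "t + a"] a by linarith
  have "surv M T (b + t) / surv M T t \<le> surv M T (b + (t + a)) / surv M T (t + a)"
    using D t a b unfolding DFR_def mono_on_def by auto
  then show ?thesis
    using pos_0 pos_a by (simp add: field_simps add_ac)
qed (simp add: surv_def)

text \<open>The same inequality for g, obtained from the survival function by passing to left limits
  (shifting both increments a, b by -1/(m+1)).\<close>
lemma DFR_tail_ge_log_supermodular:
  assumes T[measurable]: "T \<in> borel_measurable M" and D: "DFR M T"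
    and s: "0 \<le> s" and a: "0 \<le> a" and b: "0 \<le> b"
  shows "tail_ge M T (s + a) * tail_ge M T (s + b) \<le> tail_ge M T s * tail_ge M T (s + a + b)"
proof (cases "a = 0 \<or> b = 0")
  case False
  then have "0 < min a b" using a b by auto
  let ?e = "\<lambda>m. 1 / real (Suc m)"
  have small: "\<forall>\<^sub>F m in sequentially. ?e m \<le> min a b"
    using \<open>0 < min a b\<close> LIMSEQ_inverse_real_of_nat[THEN order_tendstoD(2), of "min a b"]
    by (auto elim: eventually_mono simp: inverse_eq_divide)
  have lhs: "(\<lambda>m. surv M T (s + a - ?e m) * surv M T (s + b - ?e m))
      \<longlonglongrightarrow> tail_ge M T (s + a) * tail_ge M T (s + b)"
    by (intro tendsto_mult surv_left_limit T) auto
  have rhs: "(\<lambda>m. surv M T s * surv M T (s + a + b - 2 / real (Suc m)))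
      \<longlonglongrightarrow> surv M T s * tail_ge M T (s + a + b)"
    by (intro tendsto_mult surv_left_limit T tendsto_const) auto
  have "\<forall>\<^sub>F m in sequentially. surv M T (s + a - ?e m) * surv M T (s + b - ?e m)
      \<le> surv M T s * surv M T (s + a + b - 2 / real (Suc m))"
    using small
  proof eventually_elim
    case (elim m)
    have "surv M T (s + (a - ?e m)) * surv M T (s + (b - ?e m))
        \<le> surv M T s * surv M T (s + (a - ?e m) + (b - ?e m))"
      using elim by (intro DFR_surv_log_supermodular[OF T D s]) auto
    then show ?case by (simp add: algebra_simps)
  qed
  then have "tail_ge M T (s + a) * tail_ge M T (s + b) \<le> surv M T s * tail_ge M T (s + a + b)"
    using tendsto_le[OF _ rhs lhs] by simp
  also have "\<dots> \<le> tail_ge M T s * tail_ge M T (s + a + b)"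
    unfolding tail_ge_def surv_def by (intro mult_right_mono finite_measure_mono) auto
  finally show ?thesis .
qed (auto simp: algebra_simps)

text \<open>g is antitone, hence Borel measurable; this rule lets the measurability prover see through g.\<close>
lemma measurable_tail_ge[measurable (raw)]:
  assumes "T \<in> borel_measurable M" and "f \<in> borel_measurable N"
  shows "(\<lambda>x. tail_ge M T (f x)) \<in> borel_measurable N"
proof -
  have "(\<lambda>u. - tail_ge M T u) \<in> borel_measurable borel"
    by (rule borel_measurable_mono) (auto simp: mono_def intro: tail_ge_antimono assms(1))
  then have "(\<lambda>u. - (- tail_ge M T u)) \<in> borel_measurable borel" by measurable
  then show ?thesis using assms(2) by (simp add: measurable_compose)
qed

lemma integrable_tail_ge:
  assumes "T \<in> borel_measurable M" and "finite_measure P" and "f \<in> borel_measurable P"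
  shows "integrable P (\<lambda>x. tail_ge M T (f x))"
  using assms tail_ge_bounds
  by (intro finite_measure.integrable_const_bound[where B=1]) (auto intro!: measurable_tail_ge)

end

lemma fst_borel_measurable[measurable]: "fst \<in> borel_measurable (borel :: (real \<times> real) measure)"
  unfolding borel_prod[symmetric] by measurable

lemma snd_borel_measurable[measurable]: "snd \<in> borel_measurable (borel :: (real \<times> real) measure)"
  unfolding borel_prod[symmetric] by measurable

context prob_space begin

text \<open>Fubini: E g(s + Y) is the integral of the distribution function of Y (shifted by s)
  against the law of T.\<close>
lemma integral_tail_ge_shift:
  assumes T[measurable]: "T \<in> borel_measurable M" and P: "prob_space P"
    and [measurable]: "Y \<in> borel_measurable P"
  shows "(\<integral>p. tail_ge M T (s + Y p) \<partial>P)
       = (\<integral>t. measure P {p\<in>space P. Y p \<le> t - s} \<partial>distr M borel T)"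
proof -
  let ?PT = "distr M borel T"
  interpret P: prob_space P by fact
  interpret PT: prob_space ?PT by (rule prob_space_distr) simp
  interpret PP: pair_prob_space P ?PT ..
  let ?f = "\<lambda>p t. if s + Y p \<le> t then 1 else 0 :: real"
  have "(\<integral>p. tail_ge M T (s + Y p) \<partial>P) = (\<integral>p. (\<integral>t. ?f p t \<partial>?PT) \<partial>P)"
  proof (rule Bochner_Integration.integral_cong[OF refl])
    fix p
    have "tail_ge M T (s + Y p) = measure ?PT {s + Y p..}"
      unfolding tail_ge_def by (subst measure_distr) (auto intro!: arg_cong[where f="measure M"])
    moreover have "?f p = indicator {s + Y p..}" by (auto simp: fun_eq_iff)
    ultimately show "tail_ge M T (s + Y p) = (\<integral>t. ?f p t \<partial>?PT)" by simp
  qed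
  also have "\<dots> = (\<integral>t. (\<integral>p. ?f p t \<partial>P) \<partial>?PT)"
    by (rule PP.Fubini_integral[symmetric], rule PP.integrable_const_bound[where B=1]) auto
  also have "\<dots> = (\<integral>t. measure P {p\<in>space P. Y p \<le> t - s} \<partial>?PT)"
  proof (rule Bochner_Integration.integral_cong[OF refl])
    fix t
    have "(\<lambda>p. ?f p t) = indicator {p. Y p \<le> t - s}" by (auto simp: fun_eq_iff)
    then show "(\<integral>p. ?f p t \<partial>P) = measure P {p\<in>space P. Y p \<le> t - s}"
      by (auto intro: arg_cong[where f="measure P"])
  qed
  finally show ?thesis .
qed

lemma integral_tail_ge_st_mono:
  assumes T[measurable]: "T \<in> borel_measurable M" and P: "prob_space P"
    and Y1[measurable]: "Y1 \<in> borel_measurable P" and Y2[measurable]: "Y2 \<in> borel_measurable P"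
    and st: "st_le P Y2 Y1"
  shows "(\<integral>p. tail_ge M T (s + Y1 p) \<partial>P) \<le> (\<integral>p. tail_ge M T (s + Y2 p) \<partial>P)"
proof -
  interpret P: prob_space P by fact
  interpret PT: prob_space "distr M borel T" by (rule prob_space_distr) simp
  have cdf_le: "measure P {p\<in>space P. Y1 p \<le> c} \<le> measure P {p\<in>space P. Y2 p \<le> c}" for c
  proof -
    have "measure P {p\<in>space P. c < Y2 p} \<le> measure P {p\<in>space P. c < Y1 p}"
      using st unfolding st_le_def by auto
    moreover have "{p\<in>space P. Y p \<le> c} = space P - {p\<in>space P. c < Y p}" for Y by auto
    ultimately show ?thesis
      by (simp only:) (subst (1 2) P.prob_compl; measurable)
  qed
  have cdf_integrable: "integrable (distr M borel T) (\<lambda>t. measure P {p\<in>space P. Y p \<le> t - s})"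
    if [measurable]: "Y \<in> borel_measurable P" for Y
  proof (rule PT.integrable_const_bound[where B=1])
    have "mono (\<lambda>t. measure P {p\<in>space P. Y p \<le> t - s})"
      unfolding mono_def by (auto intro!: P.finite_measure_mono)
    then show "(\<lambda>t. measure P {p\<in>space P. Y p \<le> t - s}) \<in> borel_measurable (distr M borel T)"
      using borel_measurable_mono by simp
  qed auto
  show ?thesis
    unfolding integral_tail_ge_shift[OF T P Y1] integral_tail_ge_shift[OF T P Y2] by (intro integral_mono cdf_integrable cdf_le) auto
qed

text \<open>For an associated pair, the decreasing functions g(s + Y1) and g(s + Y2) are positively
  correlated (apply the definition to their negatives).\<close>
lemma integral_tail_ge_associated:
  assumes T[measurable]: "T \<in> borel_measurable M" and P: "prob_space P"
    and [measurable]: "Y1 \<in> borel_measurable P" "Y2 \<in> borel_measurable P"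
    and A: "associated P (\<lambda>p. (Y1 p, Y2 p))"
  shows "(\<integral>p. tail_ge M T (s + Y1 p) \<partial>P) * (\<integral>p. tail_ge M T (s + Y2 p) \<partial>P)
          \<le> (\<integral>p. tail_ge M T (s + Y1 p) * tail_ge M T (s + Y2 p) \<partial>P)"
proof -
  interpret P: prob_space P by fact
  let ?f = "\<lambda>z::real \<times> real. - tail_ge M T (s + fst z)"
  let ?g = "\<lambda>z::real \<times> real. - tail_ge M T (s + snd z)"
  have incr: "coord_incr ?f" "coord_incr ?g"
    unfolding coord_incr_def by (auto intro: tail_ge_antimono)
  have bound: "\<bar>?f z * ?g z\<bar> \<le> 1" for z
    using tail_ge_bounds[of T] by (auto simp: abs_mult intro!: mult_le_one)
  have "integrable P (\<lambda>p. ?f (Y1 p, Y2 p))" "integrable P (\<lambda>p. ?g (Y1 p, Y2 p))"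
    using integrable_tail_ge[OF T P.finite_measure_axioms] by auto
  moreover have "integrable P (\<lambda>p. ?f (Y1 p, Y2 p) * ?g (Y1 p, Y2 p))"
    using bound by (intro P.integrable_const_bound[where B=1]) auto
  ultimately have "0 \<le> (\<integral>p. ?f (Y1 p, Y2 p) * ?g (Y1 p, Y2 p) \<partial>P)
      - (\<integral>p. ?f (Y1 p, Y2 p) \<partial>P) * (\<integral>p. ?g (Y1 p, Y2 p) \<partial>P)"
    using A incr unfolding associated_def by blast
  then show ?thesis by simp
qed

text \<open>Key inequality for one pair: if (Y1,Y2) is nonnegative and associated with Y2 <=st Y1,
  then (E g(s+Y1))^2 <= E g(s+Y1) E g(s+Y2) <= E[g(s+Y1) g(s+Y2)] <= g(s) E g(s+Y1+Y2).\<close>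
lemma associated_pair_inequality:
  assumes T[measurable]: "T \<in> borel_measurable M" and D: "DFR M T" and P: "prob_space P"
    and [measurable]: "Y1 \<in> borel_measurable P" "Y2 \<in> borel_measurable P"
    and nn: "AE p in P. 0 \<le> Y1 p \<and> 0 \<le> Y2 p"
    and A: "associated P (\<lambda>p. (Y1 p, Y2 p))" and st: "st_le P Y2 Y1" and s: "0 \<le> s"
  shows "(\<integral>p. tail_ge M T (s + Y1 p) \<partial>P)\<^sup>2
         \<le> tail_ge M T s * (\<integral>p. tail_ge M T (s + Y1 p + Y2 p) \<partial>P)"
proof -
  interpret P: prob_space P by fact
  let ?g = "tail_ge M T"
  have "(\<integral>p. ?g (s + Y1 p) \<partial>P)\<^sup>2 = (\<integral>p. ?g (s + Y1 p) \<partial>P) * (\<integral>p. ?g (s + Y1 p) \<partial>P)"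
    by (simp add: power2_eq_square)
  also have "\<dots> \<le> (\<integral>p. ?g (s + Y1 p) \<partial>P) * (\<integral>p. ?g (s + Y2 p) \<partial>P)"
    by (intro mult_left_mono integral_tail_ge_st_mono[OF T P] integral_nonneg_AE)
       (auto simp: st tail_ge_bounds)
  also have "\<dots> \<le> (\<integral>p. ?g (s + Y1 p) * ?g (s + Y2 p) \<partial>P)"
    by (rule integral_tail_ge_associated[OF T P _ _ A]) auto
  also have "\<dots> \<le> (\<integral>p. ?g s * ?g (s + Y1 p + Y2 p) \<partial>P)"
  proof (rule integral_mono_AE)
    have "\<bar>?g u * ?g v\<bar> \<le> 1" for u v
      using tail_ge_bounds[of T] by (auto simp: abs_mult intro!: mult_le_one)
    then show "integrable P (\<lambda>p. ?g (s + Y1 p) * ?g (s + Y2 p))"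
      by (intro P.integrable_const_bound[where B=1]) auto
    show "integrable P (\<lambda>p. ?g s * ?g (s + Y1 p + Y2 p))"
      using integrable_tail_ge[OF T P.finite_measure_axioms] by auto
    show "AE p in P. ?g (s + Y1 p) * ?g (s + Y2 p) \<le> ?g s * ?g (s + Y1 p + Y2 p)"
      using nn by eventually_elim (simp add: DFR_tail_ge_log_supermodular[OF T D s])
  qed
  also have "\<dots> = ?g s * (\<integral>p. ?g (s + Y1 p + Y2 p) \<partial>P)" by simp
  finally show ?thesis .
qed

end

text \<open>Integrating a pointwise inequality f1^2 <= f0 f2 of nonnegative functions:
  by Cauchy-Schwarz, (int f1)^2 <= (int sqrt(f0 f2))^2 <= int f0 * int f2.\<close>
lemma integral_square_le_of_pointwise:
  fixes f0 f1 f2 :: "'b \<Rightarrow> real"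
  assumes [measurable]: "f1 \<in> borel_measurable F"
    and i0: "integrable F f0" and i1: "integrable F f1" and i2: "integrable F f2"
    and nn: "AE x in F. 0 \<le> f0 x \<and> 0 \<le> f1 x \<and> 0 \<le> f2 x"
    and dom: "AE x in F. (f1 x)\<^sup>2 \<le> f0 x * f2 x"
  shows "(\<integral>x. f1 x \<partial>F)\<^sup>2 \<le> (\<integral>x. f0 x \<partial>F) * (\<integral>x. f2 x \<partial>F)"
proof -
  have [measurable]: "f0 \<in> borel_measurable F" "f2 \<in> borel_measurable F"
    using i0 i2 by auto
  let ?r = "\<lambda>f x. ennreal (sqrt (f x))"
  have enn_int: "ennreal (\<integral>x. f x \<partial>F) = (\<integral>\<^sup>+x. ennreal (f x) \<partial>F)"
    if "integrable F f" "AE x in F. 0 \<le> f x" for f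
    using nn_integral_eq_integral[OF that] by simp
  have nn1: "AE x in F. 0 \<le> f1 x" using nn by auto
  have "ennreal (\<integral>x. f1 x \<partial>F) \<le> (\<integral>\<^sup>+x. ?r f0 x * ?r f2 x \<partial>F)"
    unfolding enn_int[OF i1 nn1]
  proof (rule nn_integral_mono_AE)
    show "AE x in F. ennreal (f1 x) \<le> ?r f0 x * ?r f2 x"
      using nn dom
    proof eventually_elim
      case (elim x)
      then have "f1 x \<le> sqrt (f0 x * f2 x)" by (simp add: real_le_rsqrt)
      then show ?case using elim by (simp add: ennreal_mult[symmetric] real_sqrt_mult ennreal_leI)
    qed
  qed
  then have "(ennreal (\<integral>x. f1 x \<partial>F))\<^sup>2 \<le> (\<integral>\<^sup>+x. ?r f0 x * ?r f2 x \<partial>F)\<^sup>2"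
    by (rule power_mono_ennreal)
  also have "\<dots> \<le> (\<integral>\<^sup>+x. (?r f0 x)\<^sup>2 \<partial>F) * (\<integral>\<^sup>+x. (?r f2 x)\<^sup>2 \<partial>F)"
    by (rule Cauchy_Schwarz_nn_integral) auto
  also have "\<dots> = ennreal ((\<integral>x. f0 x \<partial>F) * (\<integral>x. f2 x \<partial>F))"
  proof -
    have "(\<integral>\<^sup>+x. (?r f x)\<^sup>2 \<partial>F) = ennreal (\<integral>x. f x \<partial>F)"
      if "integrable F f" "AE x in F. 0 \<le> f x" for f
      unfolding enn_int[OF that]
      by (intro nn_integral_cong_AE, use that(2) in eventually_elim) (simp add: ennreal_power)
    moreover have "0 \<le> (\<integral>x. f0 x \<partial>F)" "0 \<le> (\<integral>x. f2 x \<partial>F)"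
      using nn by (auto intro!: integral_nonneg_AE)
    ultimately show ?thesis using i0 i2 nn by (simp add: ennreal_mult)
  qed
  finally have "ennreal ((\<integral>x. f1 x \<partial>F)\<^sup>2) \<le> ennreal ((\<integral>x. f0 x \<partial>F) * (\<integral>x. f2 x \<partial>F))"
    using integral_nonneg_AE[OF nn1] by (simp add: ennreal_power)
  moreover have "0 \<le> (\<integral>x. f0 x \<partial>F) * (\<integral>x. f2 x \<partial>F)"
    using nn by (auto intro!: integral_nonneg_AE mult_nonneg_nonneg)
  ultimately show ?thesis by (simp add: ennreal_le_iff)
qed

text \<open>With nonnegative interarrival times the partial sums are monotone, so N(t) >= n iff S_n <= t.\<close>
lemma partial_sum_mono:
  assumes nn: "\<And>k. k \<ge> 1 \<Longrightarrow> 0 \<le> X k w" and "i \<le> j"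
  shows "partial_sum X i w \<le> partial_sum X j w"
  using assms(2)
proof (induction j rule: dec_induct)
  case (step j)
  then show ?case using nn[of "Suc j"] by (simp add: partial_sum_def)
qed simp

lemma counting_ge_iff:
  assumes nn: "\<And>k. k \<ge> 1 \<Longrightarrow> 0 \<le> X k w" and t: "0 \<le> t"
  shows "enat n \<le> counting X t w \<longleftrightarrow> partial_sum X n w \<le> t"
proof
  assume "partial_sum X n w \<le> t"
  then show "enat n \<le> counting X t w" unfolding counting_def by (blast intro: Sup_upper)
next
  assume le: "enat n \<le> counting X t w"
  show "partial_sum X n w \<le> t"
  proof (rule ccontr)
    assume gt: "\<not> partial_sum X n w \<le> t"
    then have "n \<noteq> 0" using t by (cases n) (auto simp: partial_sum_def)
    have "k \<le> n - 1" if k: "partial_sum X k w \<le> t" for k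
    proof (rule ccontr)
      assume "\<not> k \<le> n - 1"
      then have "n \<le> k" by linarith
      with nn have "partial_sum X n w \<le> partial_sum X k w"
        by (rule partial_sum_mono)
      then show False using k gt by linarith
    qed
    then have "counting X t w \<le> enat (n - 1)"
      unfolding counting_def by (auto intro!: Sup_least)
    then have "enat n \<le> enat (n - 1)" using le by (rule order_trans[rotated])
    then show False using \<open>n \<noteq> 0\<close> by simp
  qed
qed

context prob_space begin

lemma prob_le_indep_eq_integral_tail_ge:
  assumes indep: "indep_var borel T borel S"
  shows "measure M {w\<in>space M. S w \<le> T w} = (\<integral>w. tail_ge M T (S w) \<partial>M)"
proof -
  have T[measurable]: "T \<in> borel_measurable M" and S[measurable]: "S \<in> borel_measurable M"
    using indep unfolding indep_var_eq by auto
  let ?PT = "distr M borel T" and ?PS = "distr M borel S"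
  interpret PT: prob_space ?PT by (rule prob_space_distr) simp
  interpret PS: prob_space ?PS by (rule prob_space_distr) simp
  interpret PP: pair_prob_space ?PT ?PS ..
  let ?D = "{p::real \<times> real. snd p \<le> fst p}"
  have "{p\<in>space (borel \<Otimes>\<^sub>M borel). snd p \<le> (fst p::real)} \<in> sets (borel \<Otimes>\<^sub>M borel)"
    by measurable
  then have [measurable]: "?D \<in> sets (borel \<Otimes>\<^sub>M borel)" by (simp add: space_pair_measure)
  have "emeasure M {w\<in>space M. S w \<le> T w} = emeasure (distr M (borel \<Otimes>\<^sub>M borel) (\<lambda>w. (T w, S w))) ?D"
    by (subst emeasure_distr) (auto intro!: arg_cong[where f="emeasure M"])
  also have "\<dots> = emeasure (?PT \<Otimes>\<^sub>M ?PS) ?D"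
    using indep unfolding indep_var_distribution_eq by simp
  also have "\<dots> = (\<integral>\<^sup>+s. emeasure ?PT ((\<lambda>t. (t, s)) -` ?D) \<partial>?PS)"
    by (rule PP.emeasure_pair_measure_alt2) simp
  also have "\<dots> = (\<integral>\<^sup>+s. ennreal (tail_ge M T s) \<partial>?PS)"
  proof (rule nn_integral_cong)
    fix s
    have "emeasure ?PT ((\<lambda>t. (t, s)) -` ?D) = emeasure M {w\<in>space M. s \<le> T w}"
      by (subst emeasure_distr) (auto intro!: arg_cong[where f="emeasure M"])
    then show "emeasure ?PT ((\<lambda>t. (t, s)) -` ?D) = ennreal (tail_ge M T s)"
      unfolding tail_ge_def by (simp add: emeasure_eq_measure)
  qed
  also have "\<dots> = (\<integral>\<^sup>+w. ennreal (tail_ge M T (S w)) \<partial>M)"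
    by (rule nn_integral_distr) auto
  also have "\<dots> = ennreal (\<integral>w. tail_ge M T (S w) \<partial>M)"
    by (intro nn_integral_eq_integral integrable_tail_ge finite_measure_axioms)
       (auto simp: tail_ge_bounds)
  finally show ?thesis
    by (simp add: emeasure_eq_measure integral_nonneg_AE tail_ge_bounds)
qed

lemma indep_var_partial_sum:
  assumes X: "\<forall>k\<ge>1. X k \<in> borel_measurable M" and [measurable]: "T \<in> borel_measurable M"
    and indep: "indep_set
           {T -` B \<inter> space M | B. B \<in> sets (borel :: real measure)}
           {(\<lambda>w. \<lambda>k\<in>{1..}. X k w) -` C \<inter> space M | C. C \<in> sets (PiM {1..} (\<lambda>_. (borel :: real measure)))}"
  shows "indep_var borel T borel (partial_sum X n)"
proof -
  let ?PI = "PiM {1::nat..} (\<lambda>_. (borel :: real measure))"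
  let ?Xs = "\<lambda>w. \<lambda>k\<in>{1..}. X k w"
  let ?sum = "\<lambda>\<xi>. \<Sum>i\<in>{1..n}. \<xi> i"
  have Xs[measurable]: "?Xs \<in> measurable M ?PI"
    by (rule measurable_restrict) (use X in auto)
  have S_eq: "partial_sum X n = ?sum \<circ> ?Xs"
    by (auto simp: partial_sum_def fun_eq_iff)
  have [measurable]: "partial_sum X n \<in> borel_measurable M"
    unfolding S_eq by measurable
  have stable: "Int_stable {f -` B \<inter> space M | B. B \<in> sets N}" for f :: "'a \<Rightarrow> 'b" and N
  proof (rule Int_stableI)
    fix A B assume "A \<in> {f -` B \<inter> space M | B. B \<in> sets N}" "B \<in> {f -` B \<inter> space M | B. B \<in> sets N}"
    then obtain A' B' where "A = f -` A' \<inter> space M" "B = f -` B' \<inter> space M" "A' \<in> sets N" "B' \<in> sets N"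
      by auto
    then show "A \<inter> B \<in> {f -` B \<inter> space M | B. B \<in> sets N}"
      by (intro CollectI exI[of _ "A' \<inter> B'"]) auto
  qed
  have "{partial_sum X n -` A \<inter> space M | A. A \<in> sets borel}
      \<subseteq> {?Xs -` C \<inter> space M | C. C \<in> sets ?PI}"
  proof safe
    fix A :: "real set" assume "A \<in> sets borel"
    then have "?sum -` A \<inter> space ?PI \<in> sets ?PI" by measurable
    moreover have "partial_sum X n -` A \<inter> space M = ?Xs -` (?sum -` A \<inter> space ?PI) \<inter> space M"
      using measurable_space[OF Xs] unfolding S_eq by auto
    ultimately show "\<exists>C. partial_sum X n -` A \<inter> space M = ?Xs -` C \<inter> space M \<and> C \<in> sets ?PI"
      by blast
  qed
  then have sub: "sigma_sets (space M) {partial_sum X n -` A \<inter> space M | A. A \<in> sets borel}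
      \<subseteq> sigma_sets (space M) {?Xs -` C \<inter> space M | C. C \<in> sets ?PI}"
    by (rule sigma_sets_mono')
  have "indep_set (sigma_sets (space M) {T -` B \<inter> space M | B. B \<in> sets borel})
      (sigma_sets (space M) {partial_sum X n -` A \<inter> space M | A. A \<in> sets borel})"
    using indep_set_sigma_sets[OF indep stable stable] unfolding indep_set_def
    by (rule indep_sets_mono_sets) (use sub in \<open>auto split: bool.split\<close>)
  then show ?thesis unfolding indep_var_eq by simp
qed

end

text \<open>The regular conditional distribution is only given on Nn; extending it by a point mass
  outside Nn yields a probability kernel on all of R^n.\<close>
definition rcd_kernel :: "(nat \<Rightarrow> real) set \<Rightarrow> ((nat \<Rightarrow> real) \<Rightarrow> (real \<times> real) measure)
    \<Rightarrow> (nat \<Rightarrow> real) \<Rightarrow> (real \<times> real) measure" where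
  "rcd_kernel Nn \<mu> x = (if x \<in> Nn then \<mu> x else return borel (0, 0))"

lemma quadrant_borel[measurable]: "quadrant \<in> sets (borel :: (real \<times> real) measure)"
  unfolding quadrant_def by (intro borel_closed closed_Times) auto

lemma is_rcdD:
  assumes "is_rcd M X n Nn \<mu>"
  shows "Nn \<in> sets (Rn n)" "Nn \<subseteq> {x. \<forall>i\<in>{1..n}. 0 \<le> x i}"
    "measure M {w\<in>space M. first_n X n w \<in> Nn} = 1"
    "\<And>x. x \<in> Nn \<Longrightarrow> prob_space (\<mu> x)"
    "\<And>x. x \<in> Nn \<Longrightarrow> sets (\<mu> x) = sets (borel :: (real \<times> real) measure)"
    "\<And>x. x \<in> Nn \<Longrightarrow> emeasure (\<mu> x) quadrant = 1"
    "\<And>B. B \<in> sets (borel :: (real \<times> real) measure) \<Longrightarrow> B \<subseteq> quadrant \<Longrightarrow>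
        (\<lambda>x. emeasure (\<mu> x) B) \<in> borel_measurable (restrict_space (Rn n) Nn)"
    "\<And>A B. A \<in> sets (Rn n) \<Longrightarrow> A \<subseteq> Nn \<Longrightarrow> B \<in> sets (borel :: (real \<times> real) measure) \<Longrightarrow>
        B \<subseteq> quadrant \<Longrightarrow>
        emeasure M {w\<in>space M. first_n X n w \<in> A \<and> (X (n+1) w, X (n+2) w) \<in> B}
        = (\<integral>\<^sup>+ x. indicator A x * emeasure (\<mu> x) B \<partial>(distr M (Rn n) (first_n X n)))"
  using assms unfolding is_rcd_def by simp_all

lemma rcd_kernel_prob_space:
  assumes "is_rcd M X n Nn \<mu>"
  shows "prob_space (rcd_kernel Nn \<mu> x)" "sets (rcd_kernel Nn \<mu> x) = sets (borel :: (real \<times> real) measure)"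
  using is_rcdD[OF assms] unfolding rcd_kernel_def by (auto intro: prob_space_return)

lemma AE_in_quadrant:
  assumes "prob_space P" and "sets P = sets (borel :: (real \<times> real) measure)"
    and "emeasure P quadrant = 1"
  shows "AE p in P. p \<in> quadrant"
proof -
  interpret prob_space P by fact
  show ?thesis using assms(2,3) by (intro AE_prob_1) (auto simp: emeasure_eq_measure)
qed

lemma rcd_kernel_measurable:
  assumes R: "is_rcd M X n Nn \<mu>"
  shows "rcd_kernel Nn \<mu> \<in> measurable (Rn n) (subprob_algebra borel)"
proof (rule measurable_subprob_algebra)
  fix x
  show "subprob_space (rcd_kernel Nn \<mu> x)"
    using rcd_kernel_prob_space(1)[OF R] by (rule prob_space_imp_subprob_space)
  show "sets (rcd_kernel Nn \<mu> x) = sets borel" by (rule rcd_kernel_prob_space(2)[OF R])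
next
  fix A :: "(real \<times> real) set" assume A: "A \<in> sets borel"
  have Nn: "Nn \<in> sets (Rn n)" by (rule is_rcdD(1)[OF R])
  (* On Nn the kernel only charges the quadrant, where measurability is assumed. *)
  have "emeasure (\<mu> x) A = emeasure (\<mu> x) (A \<inter> quadrant)" if "x \<in> Nn" for x
    using A AE_in_quadrant[OF is_rcdD(4-6)[OF R that]] is_rcdD(5)[OF R that]
    by (intro emeasure_eq_AE) auto
  then have eq: "emeasure (rcd_kernel Nn \<mu> x) A
      = (if x \<in> Nn then emeasure (\<mu> x) (A \<inter> quadrant) else emeasure (return borel (0, 0)) A)" for x
    by (simp add: rcd_kernel_def)
  have "{x \<in> space (Rn n). x \<in> Nn} = Nn"
    using sets.sets_into_space[OF Nn] by auto
  then have "{x \<in> space (Rn n). x \<in> Nn} \<in> sets (Rn n)" using Nn by simp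
  moreover have "(\<lambda>x. emeasure (\<mu> x) (A \<inter> quadrant)) \<in> borel_measurable (restrict_space (Rn n) Nn)"
    using A by (intro is_rcdD(7)[OF R]) auto
  ultimately show "(\<lambda>x. emeasure (rcd_kernel Nn \<mu> x) A) \<in> borel_measurable (Rn n)"
    unfolding eq by (subst measurable_If_restrict_space_iff) auto
qed

lemma first_n_measurable:
  assumes "\<forall>k\<ge>1. X k \<in> borel_measurable M"
  shows "first_n X n \<in> measurable M (Rn n)"
  unfolding first_n_def by (rule measurable_restrict) (use assms in auto)

lemma Pair_rcd_kernel_measurable:
  assumes R: "is_rcd M X n Nn \<mu>" and x: "x \<in> space (Rn n)"
  shows "Pair x \<in> measurable (rcd_kernel Nn \<mu> x) (Rn n \<Otimes>\<^sub>M borel)"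
  using x by (simp add: measurable_cong_sets[OF rcd_kernel_prob_space(2)[OF R] refl])

lemma graph_kernel_measurable:
  assumes R: "is_rcd M X n Nn \<mu>"
  shows "(\<lambda>x. distr (rcd_kernel Nn \<mu> x) (Rn n \<Otimes>\<^sub>M borel) (Pair x))
    \<in> measurable (Rn n) (subprob_algebra (Rn n \<Otimes>\<^sub>M borel))"
proof (rule measurable_distr2[where M=borel])
  show "(\<lambda>(x, y). (x, y)) \<in> measurable (Rn n \<Otimes>\<^sub>M borel) (Rn n \<Otimes>\<^sub>M borel)"
    by (simp add: case_prod_Pair_iden)
qed (rule rcd_kernel_measurable[OF R])

context prob_space begin

lemma AE_first_n_in_Nn:
  assumes R: "is_rcd M X n Nn \<mu>"
  shows "AE w in M. first_n X n w \<in> Nn"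
proof -
  have "Nn \<in> sets (Rn n)" by (rule is_rcdD(1)[OF R])
  then have "AE w in M. w \<in> {w\<in>space M. first_n X n w \<in> Nn}"
    using is_rcdD(3)[OF R] by (intro AE_prob_1) auto
  then show ?thesis by auto
qed

lemma AE_distr_first_n_in_Nn:
  assumes R: "is_rcd M X n Nn \<mu>" and X: "\<forall>k\<ge>1. X k \<in> borel_measurable M"
  shows "AE x in distr M (Rn n) (first_n X n). x \<in> Nn"
proof -
  have Nn: "Nn \<in> sets (Rn n)" by (rule is_rcdD(1)[OF R])
  have fn: "first_n X n \<in> measurable M (Rn n)" using X by (rule first_n_measurable)
  have "{x \<in> space (Rn n). x \<in> Nn} = Nn" using sets.sets_into_space[OF Nn] by auto
  then show ?thesis using AE_first_n_in_Nn[OF R] Nn by (subst AE_distr_iff[OF fn]) auto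
qed

text \<open>Disintegration: the law of ((X_1..X_n), (X_{n+1},X_{n+2})) is obtained by drawing x from
  the law of (X_1..X_n) and then the pair from the kernel at x; it suffices to compare
  both measures on rectangles, where this is the defining property of the kernel.\<close>
lemma joint_distr_eq_bind:
  assumes R: "is_rcd M X n Nn \<mu>"
    and X: "\<forall>k\<ge>1. X k \<in> borel_measurable M" and nn: "\<forall>k\<ge>1. \<forall>w\<in>space M. 0 \<le> X k w"
  shows "distr M (Rn n \<Otimes>\<^sub>M borel) (\<lambda>w. (first_n X n w, (X (n+1) w, X (n+2) w)))
       = Giry_Monad.bind (distr M (Rn n) (first_n X n)) (\<lambda>x. distr (rcd_kernel Nn \<mu> x) (Rn n \<Otimes>\<^sub>M borel) (Pair x))"
    (is "?Q = Giry_Monad.bind ?F ?N")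
proof -
  have fn[measurable]: "first_n X n \<in> measurable M (Rn n)" using X by (rule first_n_measurable)
  have [measurable]: "X (n+1) \<in> borel_measurable M" "X (n+2) \<in> borel_measurable M" using X by auto
  have Phi[measurable]: "(\<lambda>w. (first_n X n w, (X (n+1) w, X (n+2) w))) \<in> measurable M (Rn n \<Otimes>\<^sub>M borel)"
    by measurable
  have Y[measurable]: "(\<lambda>w. (X (n+1) w, X (n+2) w)) \<in> borel_measurable M" by measurable
  have event: "{w\<in>space M. first_n X n w \<in> a \<and> (X (n+1) w, X (n+2) w) \<in> b} \<in> sets M"
    if "a \<in> sets (Rn n)" "b \<in> sets (borel :: (real \<times> real) measure)" for a b
  proof -
    have "{w\<in>space M. first_n X n w \<in> a \<and> (X (n+1) w, X (n+2) w) \<in> b}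
        = (first_n X n -` a \<inter> space M) \<inter> ((\<lambda>w. (X (n+1) w, X (n+2) w)) -` b \<inter> space M)"
      by auto
    then show ?thesis
      using measurable_sets[OF Y that(2)] measurable_sets[OF fn that(1)] by auto
  qed
  have N: "?N \<in> measurable ?F (subprob_algebra (Rn n \<Otimes>\<^sub>M borel))"
    using graph_kernel_measurable[OF R] by (simp add: measurable_cong_sets[OF sets_distr refl])
  have Fne: "space ?F \<noteq> {}"
    using prob_space.not_empty[OF prob_space_distr] by simp
  have Nn[measurable]: "Nn \<in> sets (Rn n)" by (rule is_rcdD(1)[OF R])
  show ?thesis
  proof (rule measure_eqI_generator_eq[OF Int_stable_pair_measure_generator pair_measure_closed])
    show "sets ?Q = sigma_sets (space (Rn n) \<times> space borel) {a \<times> b |a b. a \<in> sets (Rn n) \<and> b \<in> sets borel}"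
      by (simp add: sets_pair_measure)
    show "sets (Giry_Monad.bind ?F ?N) = sigma_sets (space (Rn n) \<times> space borel) {a \<times> b |a b. a \<in> sets (Rn n) \<and> b \<in> sets borel}"
      by (subst sets_bind[OF _ Fne, where N="Rn n \<Otimes>\<^sub>M borel"]) (auto simp: sets_pair_measure)
    show "range (\<lambda>i. space (Rn n) \<times> space borel) \<subseteq> {a \<times> b |a b. a \<in> sets (Rn n) \<and> b \<in> sets borel}"
      using sets.top[of "Rn n"] sets.top[of "borel :: (real\<times>real) measure"] by blast
    show "(\<Union>i. space (Rn n) \<times> space borel) = space (Rn n) \<times> space borel" by simp
    have "space (Rn n) \<times> space (borel :: (real \<times> real) measure) \<in> sets (Rn n \<Otimes>\<^sub>M borel)"
      by simp
    then show "emeasure ?Q (space (Rn n) \<times> space borel) \<noteq> \<infinity>" for i :: nat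
      by (subst emeasure_distr[OF Phi]) (auto simp: emeasure_finite)
  next
    fix Z assume "Z \<in> {a \<times> b |a b. a \<in> sets (Rn n) \<and> b \<in> sets (borel :: (real\<times>real) measure)}"
    then obtain a b where Z: "Z = a \<times> b" and a[measurable]: "a \<in> sets (Rn n)"
      and b[measurable]: "b \<in> sets (borel :: (real \<times> real) measure)"
      by auto
    have ab: "a \<times> b \<in> sets (Rn n \<Otimes>\<^sub>M borel)" using a b by (rule pair_measureI)
    have "emeasure ?Q Z = emeasure M {w\<in>space M. first_n X n w \<in> a \<and> (X (n+1) w, X (n+2) w) \<in> b}"
      unfolding Z by (subst emeasure_distr[OF Phi ab]) (auto intro!: arg_cong[where f="emeasure M"])
    also have "\<dots> = emeasure M {w\<in>space M. first_n X n w \<in> a \<inter> Nn \<and> (X (n+1) w, X (n+2) w) \<in> b \<inter> quadrant}"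
      using AE_first_n_in_Nn[OF R] event[OF a b] event[OF sets.Int[OF a Nn] sets.Int[OF b quadrant_borel]]
      by (intro emeasure_eq_AE) (auto elim!: eventually_mono simp: quadrant_def nn)
    also have "\<dots> = (\<integral>\<^sup>+x. indicator (a \<inter> Nn) x * emeasure (\<mu> x) (b \<inter> quadrant) \<partial>?F)"
      by (rule is_rcdD(8)[OF R]) (use a b Nn in auto)
    also have "\<dots> = (\<integral>\<^sup>+x. emeasure (?N x) Z \<partial>?F)"
    proof (rule nn_integral_cong_AE)
      show "AE x in ?F. indicator (a \<inter> Nn) x * emeasure (\<mu> x) (b \<inter> quadrant) = emeasure (?N x) Z"
        using AE_distr_first_n_in_Nn[OF R X]
      proof eventually_elim
        case (elim x)
        have sx: "sets (\<mu> x) = sets borel" by (rule is_rcdD(5)[OF R elim])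
        then have "space (\<mu> x) = UNIV" using sets_eq_imp_space_eq by fastforce
        moreover have "x \<in> space (Rn n)" using sets.sets_into_space[OF Nn] elim by auto
        then have m: "Pair x \<in> measurable (\<mu> x) (Rn n \<Otimes>\<^sub>M borel)"
          by (simp add: measurable_cong_sets[OF sx refl])
        moreover have "emeasure (\<mu> x) (b \<inter> quadrant) = emeasure (\<mu> x) b"
          using AE_in_quadrant[OF is_rcdD(4-6)[OF R elim]] sx by (intro emeasure_eq_AE) auto
        ultimately show ?case
          using elim unfolding Z rcd_kernel_def by (simp only: if_True) (subst emeasure_distr[OF m ab], auto simp: indicator_def)
      qed
    qed
    also have "\<dots> = emeasure (Giry_Monad.bind ?F ?N) Z"
      by (rule emeasure_bind[symmetric, OF Fne N]) (use ab Z in auto)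
    finally show "emeasure ?Q Z = emeasure (Giry_Monad.bind ?F ?N) Z" .
  qed
qed

end

lemma kernel_integral_measurable:
  fixes h :: "(nat \<Rightarrow> real) \<times> (real \<times> real) \<Rightarrow> real"
  assumes R: "is_rcd M X n Nn \<mu>" and h[measurable]: "h \<in> borel_measurable (Rn n \<Otimes>\<^sub>M borel)"
  shows "(\<lambda>x. \<integral>p. h (x, p) \<partial>rcd_kernel Nn \<mu> x) \<in> borel_measurable (Rn n)"
proof -
  let ?N = "\<lambda>x. distr (rcd_kernel Nn \<mu> x) (Rn n \<Otimes>\<^sub>M borel) (Pair x)"
  have "(\<lambda>x. \<integral>z. h z \<partial>?N x) \<in> borel_measurable (Rn n)"
    by (rule measurable_compose[OF graph_kernel_measurable[OF R] integral_measurable_subprob_algebra[OF h]])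
  then show ?thesis
  proof (rule measurable_cong[THEN iffD1, rotated])
    fix x assume "x \<in> space (Rn n)"
    with R have "Pair x \<in> measurable (rcd_kernel Nn \<mu> x) (Rn n \<Otimes>\<^sub>M borel)"
      by (rule Pair_rcd_kernel_measurable)
    then show "(\<integral>z. h z \<partial>?N x) = (\<integral>p. h (x, p) \<partial>rcd_kernel Nn \<mu> x)"
      by (rule integral_distr[OF _ h])
  qed
qed

context prob_space begin

lemma integral_disintegration:
  fixes h :: "(nat \<Rightarrow> real) \<times> (real \<times> real) \<Rightarrow> real"
  assumes R: "is_rcd M X n Nn \<mu>"
    and X: "\<forall>k\<ge>1. X k \<in> borel_measurable M" and nn: "\<forall>k\<ge>1. \<forall>w\<in>space M. 0 \<le> X k w"
    and h[measurable]: "h \<in> borel_measurable (Rn n \<Otimes>\<^sub>M borel)" and bound: "\<And>z. \<bar>h z\<bar> \<le> B"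
  shows "(\<integral>w. h (first_n X n w, (X (n+1) w, X (n+2) w)) \<partial>M)
       = (\<integral>x. (\<integral>p. h (x, p) \<partial>rcd_kernel Nn \<mu> x) \<partial>distr M (Rn n) (first_n X n))"
proof -
  let ?F = "distr M (Rn n) (first_n X n)"
  let ?N = "\<lambda>x. distr (rcd_kernel Nn \<mu> x) (Rn n \<Otimes>\<^sub>M borel) (Pair x)"
  have fn[measurable]: "first_n X n \<in> measurable M (Rn n)" using X by (rule first_n_measurable)
  have [measurable]: "X (n+1) \<in> borel_measurable M" "X (n+2) \<in> borel_measurable M" using X by auto
  have Phi: "(\<lambda>w. (first_n X n w, (X (n+1) w, X (n+2) w))) \<in> measurable M (Rn n \<Otimes>\<^sub>M borel)"
    by measurable
  have N: "?N \<in> measurable ?F (subprob_algebra (Rn n \<Otimes>\<^sub>M borel))"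
    using graph_kernel_measurable[OF R] by (simp add: measurable_cong_sets[OF sets_distr refl])
  interpret F: prob_space ?F by (rule prob_space_distr[OF fn])
  have "(\<integral>w. h (first_n X n w, (X (n+1) w, X (n+2) w)) \<partial>M)
      = (\<integral>z. h z \<partial>distr M (Rn n \<Otimes>\<^sub>M borel) (\<lambda>w. (first_n X n w, (X (n+1) w, X (n+2) w))))"
    by (rule integral_distr[OF Phi h, symmetric])
  also have "\<dots> = (\<integral>z. h z \<partial>Giry_Monad.bind ?F ?N)"
    by (simp only: joint_distr_eq_bind[OF R X nn])
  also have "\<dots> = (\<integral>x. (\<integral>z. h z \<partial>?N x) \<partial>?F)"
  proof (rule integral_bind[OF h bound N F.finite_measure_axioms])
    show "AE x in ?F. emeasure (?N x) (space (?N x)) \<le> ennreal 1"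
    proof (rule AE_I2)
      fix x assume "x \<in> space ?F"
      with R have "Pair x \<in> measurable (rcd_kernel Nn \<mu> x) (Rn n \<Otimes>\<^sub>M borel)"
        by (intro Pair_rcd_kernel_measurable) auto
      then have "prob_space (?N x)"
        by (rule prob_space.prob_space_distr[OF rcd_kernel_prob_space(1)[OF R]])
      then have "emeasure (?N x) (space (?N x)) = 1" by (rule prob_space.emeasure_space_1)
      then show "emeasure (?N x) (space (?N x)) \<le> ennreal 1" by simp
    qed
  qed
  also have "\<dots> = (\<integral>x. (\<integral>p. h (x, p) \<partial>rcd_kernel Nn \<mu> x) \<partial>?F)"
  proof (rule Bochner_Integration.integral_cong[OF refl])
    fix x assume "x \<in> space ?F"
    with R have "Pair x \<in> measurable (rcd_kernel Nn \<mu> x) (Rn n \<Otimes>\<^sub>M borel)"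
      by (intro Pair_rcd_kernel_measurable) auto
    then show "(\<integral>z. h z \<partial>?N x) = (\<integral>p. h (x, p) \<partial>rcd_kernel Nn \<mu> x)"
      by (rule integral_distr[OF _ h])
  qed
  finally show ?thesis .
qed

lemma partial_sum_add:
  "partial_sum X (n + 1) w = partial_sum X n w + X (n + 1) w"
  "partial_sum X (n + 2) w = partial_sum X n w + X (n + 1) w + X (n + 2) w"
  by (simp_all add: partial_sum_def numeral_2_eq_2 add.assoc)

lemma integral_tail_ge_conditional:
  assumes T[measurable]: "T \<in> borel_measurable M"
    and X: "\<forall>k\<ge>1. X k \<in> borel_measurable M" and nn: "\<forall>k\<ge>1. \<forall>w\<in>space M. 0 \<le> X k w"
    and R: "is_rcd M X n Nn \<mu>" and [measurable]: "c \<in> borel_measurable borel"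
  shows "(\<integral>w. tail_ge M T (partial_sum X n w + c (X (n + 1) w, X (n + 2) w)) \<partial>M)
       = (\<integral>x. (\<integral>p. tail_ge M T ((\<Sum>i\<in>{1..n}. x i) + c p) \<partial>rcd_kernel Nn \<mu> x)
            \<partial>distr M (Rn n) (first_n X n))"
proof -
  let ?h = "\<lambda>z. tail_ge M T ((\<Sum>i\<in>{1..n}. fst z i) + c (snd z))"
  have h: "?h \<in> borel_measurable (Rn n \<Otimes>\<^sub>M borel)" by measurable
  have "partial_sum X n w = (\<Sum>i\<in>{1..n}. first_n X n w i)" for w
    by (simp add: partial_sum_def first_n_def)
  then have "(\<integral>w. tail_ge M T (partial_sum X n w + c (X (n + 1) w, X (n + 2) w)) \<partial>M)
      = (\<integral>w. ?h (first_n X n w, (X (n+1) w, X (n+2) w)) \<partial>M)"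
    by simp
  also have "\<dots> = (\<integral>x. (\<integral>p. ?h (x, p) \<partial>rcd_kernel Nn \<mu> x) \<partial>distr M (Rn n) (first_n X n))"
    using tail_ge_bounds by (intro integral_disintegration[OF R X nn h, where B=1]) auto
  finally show ?thesis by simp
qed

lemma kernel_pair_inequality:
  assumes T[measurable]: "T \<in> borel_measurable M" and D: "DFR M T"
    and R: "is_rcd M X n Nn \<mu>" and x: "x \<in> Nn"
    and A: "associated (\<mu> x) (\<lambda>p. p)" and st: "st_le (\<mu> x) snd fst" and s: "0 \<le> s"
  shows "(\<integral>p. tail_ge M T (s + fst p) \<partial>\<mu> x)\<^sup>2
      \<le> tail_ge M T s * (\<integral>p. tail_ge M T (s + (fst p + snd p)) \<partial>\<mu> x)"
proof -
  interpret K: prob_space "\<mu> x" by (rule is_rcdD(4)[OF R x])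
  have sets_K: "sets (\<mu> x) = sets borel" by (rule is_rcdD(5)[OF R x])
  have [measurable]: "fst \<in> borel_measurable (\<mu> x)" "snd \<in> borel_measurable (\<mu> x)"
    by (simp_all add: measurable_cong_sets[OF sets_K refl])
  have "AE p in \<mu> x. 0 \<le> fst p \<and> 0 \<le> snd p"
    using AE_in_quadrant[OF is_rcdD(4-6)[OF R x]] by eventually_elim (auto simp: quadrant_def)
  with A st show ?thesis
    using associated_pair_inequality[OF T D K.prob_space_axioms, of fst snd s] s
    by (simp add: add.assoc)
qed

text \<open>Step n >= 1: apply the pair inequality conditionally on (X_1..X_n) = x with s = x_1+...+x_n,
  then integrate over x using the Cauchy-Schwarz lemma.\<close>
lemma conditional_step:
  assumes T[measurable]: "T \<in> borel_measurable M" and D: "DFR M T"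
    and X: "\<forall>k\<ge>1. X k \<in> borel_measurable M" and nn: "\<forall>k\<ge>1. \<forall>w\<in>space M. 0 \<le> X k w"
    and R: "is_rcd M X n Nn \<mu>"
    and cond: "\<forall>x\<in>Nn. associated (\<mu> x) (\<lambda>p. p) \<and> st_le (\<mu> x) snd fst"
  shows "(\<integral>w. tail_ge M T (partial_sum X (n + 1) w) \<partial>M)\<^sup>2
      \<le> (\<integral>w. tail_ge M T (partial_sum X n w) \<partial>M) * (\<integral>w. tail_ge M T (partial_sum X (n + 2) w) \<partial>M)"
proof -
  let ?g = "tail_ge M T" and ?F = "distr M (Rn n) (first_n X n)" and ?K = "rcd_kernel Nn \<mu>"
  define s where "s x = (\<Sum>i\<in>{1..n}. x i)" for x :: "nat \<Rightarrow> real"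
  have [measurable]: "s \<in> borel_measurable (Rn n)"
    unfolding s_def by measurable
  (* f c x is the conditional mean of g(S_n + c(X_{n+1},X_{n+2})) given (X_1..X_n) = x. *)
  define f where "f c x = (\<integral>p. ?g (s x + c p) \<partial>?K x)" for c :: "real \<times> real \<Rightarrow> real" and x
  have fn: "first_n X n \<in> measurable M (Rn n)" using X by (rule first_n_measurable)
  interpret F: prob_space ?F by (rule prob_space_distr[OF fn])
  have f_meas: "f c \<in> borel_measurable ?F" if [measurable]: "c \<in> borel_measurable borel" for c
  proof -
    have "(\<lambda>z. ?g (s (fst z) + c (snd z))) \<in> borel_measurable (Rn n \<Otimes>\<^sub>M borel)"
      by measurable
    from kernel_integral_measurable[OF R this] show ?thesis
      unfolding f_def by (simp add: measurable_cong_sets[OF sets_distr refl])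
  qed
  have f_unit: "0 \<le> f c x \<and> f c x \<le> 1" if [measurable]: "c \<in> borel_measurable borel" for c x
  proof -
    interpret K: prob_space "?K x" by (rule rcd_kernel_prob_space[OF R])
    have [measurable]: "c \<in> borel_measurable (?K x)"
      by (simp add: measurable_cong_sets[OF rcd_kernel_prob_space(2)[OF R] refl])
    show ?thesis unfolding f_def using tail_ge_bounds
      by (auto intro!: integral_nonneg_AE K.integral_le_const integrable_tail_ge K.finite_measure_axioms)
  qed
  have f_integrable: "integrable ?F (f c)" if "c \<in> borel_measurable borel" for c
    using f_unit[OF that] by (intro F.integrable_const_bound[where B=1] f_meas that) auto
  have expect: "(\<integral>w. ?g (partial_sum X n w + c (X (n + 1) w, X (n + 2) w)) \<partial>M) = (\<integral>x. f c x \<partial>?F)"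
    if "c \<in> borel_measurable borel" for c
    unfolding f_def s_def by (rule integral_tail_ge_conditional[OF T X nn R that])
  have increments: "(\<lambda>p. 0) \<in> borel_measurable borel" "fst \<in> borel_measurable (borel :: (real \<times> real) measure)"
    "(\<lambda>p::real \<times> real. fst p + snd p) \<in> borel_measurable borel"
    by (simp_all add: borel_prod[symmetric])
  have e0: "(\<integral>w. ?g (partial_sum X n w) \<partial>M) = (\<integral>x. f (\<lambda>p. 0) x \<partial>?F)"
    using expect[of "\<lambda>p. 0"] by simp
  have e1: "(\<integral>w. ?g (partial_sum X (n + 1) w) \<partial>M) = (\<integral>x. f (\<lambda>p. fst p) x \<partial>?F)"
    unfolding partial_sum_add using expect[of fst] by simp
  have e2: "(\<integral>w. ?g (partial_sum X (n + 2) w) \<partial>M) = (\<integral>x. f (\<lambda>p. fst p + snd p) x \<partial>?F)"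
    unfolding partial_sum_add using expect[of "\<lambda>p. fst p + snd p"] by (simp add: add.assoc)
  have "(\<integral>x. f (\<lambda>p. fst p) x \<partial>?F)\<^sup>2 \<le> (\<integral>x. f (\<lambda>p. 0) x \<partial>?F) * (\<integral>x. f (\<lambda>p. fst p + snd p) x \<partial>?F)"
  proof (rule integral_square_le_of_pointwise)
    show "AE x in ?F. 0 \<le> f (\<lambda>p. 0) x \<and> 0 \<le> f (\<lambda>p. fst p) x \<and> 0 \<le> f (\<lambda>p. fst p + snd p) x"
      using f_unit by auto
    show "AE x in ?F. (f (\<lambda>p. fst p) x)\<^sup>2 \<le> f (\<lambda>p. 0) x * f (\<lambda>p. fst p + snd p) x"
      using AE_distr_first_n_in_Nn[OF R X]
    proof eventually_elim
      case (elim x)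
      have "0 \<le> s x" using elim is_rcdD(2)[OF R] unfolding s_def by (auto intro!: sum_nonneg)
      then show ?case
        using kernel_pair_inequality[OF T D R elim _ _ \<open>0 \<le> s x\<close>] cond elim
        by (simp add: f_def rcd_kernel_def add.assoc is_rcdD(4)[OF R elim] prob_space.prob_space)
    qed
  qed (rule f_meas f_integrable increments)+
  then show ?thesis unfolding e0 e1 e2 .
qed

lemma initial_step:
  assumes T[measurable]: "T \<in> borel_measurable M" and D: "DFR M T"
    and X: "\<forall>k\<ge>1. X k \<in> borel_measurable M" and nn: "\<forall>k\<ge>1. \<forall>w\<in>space M. 0 \<le> X k w"
    and A: "associated M (\<lambda>w. (X 1 w, X 2 w))" and st: "st_le M (X 2) (X 1)"
  shows "(\<integral>w. tail_ge M T (partial_sum X 1 w) \<partial>M)\<^sup>2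
      \<le> (\<integral>w. tail_ge M T (partial_sum X 0 w) \<partial>M) * (\<integral>w. tail_ge M T (partial_sum X 2 w) \<partial>M)"
proof -
  have "AE w in M. 0 \<le> X 1 w \<and> 0 \<le> X 2 w" using nn by auto
  with X have "(\<integral>w. tail_ge M T (0 + X 1 w) \<partial>M)\<^sup>2
      \<le> tail_ge M T 0 * (\<integral>w. tail_ge M T (0 + X 1 w + X 2 w) \<partial>M)"
    by (intro associated_pair_inequality[OF T D prob_space_axioms _ _ _ A st]) auto
  then show ?thesis
    by (simp add: partial_sum_def numeral_2_eq_2 prob_space)
qed

lemma prob_counting_ge:
  assumes X: "\<forall>k\<ge>1. X k \<in> borel_measurable M" and nn: "\<forall>k\<ge>1. \<forall>w\<in>space M. 0 \<le> X k w"
    and T: "T \<in> borel_measurable M" and T_nn: "\<forall>w\<in>space M. 0 \<le> T w"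
    and indep: "indep_set
           {T -` B \<inter> space M | B. B \<in> sets (borel :: real measure)}
           {(\<lambda>w. \<lambda>k\<in>{1..}. X k w) -` C \<inter> space M | C. C \<in> sets (PiM {1..} (\<lambda>_. (borel :: real measure)))}"
  shows "measure M {w\<in>space M. enat k \<le> counting X (T w) w} = (\<integral>w. tail_ge M T (partial_sum X k w) \<partial>M)"
proof -
  have "{w\<in>space M. enat k \<le> counting X (T w) w} = {w\<in>space M. partial_sum X k w \<le> T w}"
    using counting_ge_iff[of X _ "T _" k] nn T_nn by auto
  then show ?thesis
    using prob_le_indep_eq_integral_tail_ge[OF indep_var_partial_sum[OF X T indep]] by simp
qed

end

theorem corollary5p3:
  fixes M :: "'a measure" and X :: "nat \<Rightarrow> 'a \<Rightarrow> real" and T :: "'a \<Rightarrow> real"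
  assumes "prob_space M"
    and "\<forall>k\<ge>1. X k \<in> borel_measurable M"
    and "\<forall>k\<ge>1. \<forall>w\<in>space M. 0 \<le> X k w"
    and "T \<in> borel_measurable M"
    and "\<forall>w\<in>space M. 0 \<le> T w"
    and "prob_space.indep_set M
           {T -` B \<inter> space M | B. B \<in> sets (borel :: real measure)}
           {(\<lambda>w. \<lambda>k\<in>{1..}. X k w) -` C \<inter> space M | C. C \<in> sets (PiM {1..} (\<lambda>_. (borel :: real measure)))}"
    and a: "DFR M T"
    and b: "\<not> (measure M {w\<in>space M. T w = 0} > 0 \<and> measure M {w\<in>space M. X 1 w = 0} > 0)"
    and c: "associated M (\<lambda>w. (X 1 w, X 2 w))" "st_le M (X 2) (X 1)"
    and d: "\<forall>n\<ge>1. \<exists>Nn \<mu>. is_rcd M X n Nn \<mu> \<and>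
               (\<forall>x\<in>Nn. associated (\<mu> x) (\<lambda>p. p) \<and> st_le (\<mu> x) snd fst)"
  shows "disc_DFR M (\<lambda>w. counting X (T w) w)"
proof -
  interpret prob_space M by fact
  note X = assms(2) and X_nn = assms(3) and T = assms(4)
  let ?a = "\<lambda>k. \<integral>w. tail_ge M T (partial_sum X k w) \<partial>M"
  have "(?a (n + 1))\<^sup>2 \<le> ?a n * ?a (n + 2)" for n
  proof (cases "n = 0")
    case True
    then show ?thesis using initial_step[OF T a X X_nn c] by (simp add: numeral_2_eq_2)
  next
    case False
    then obtain Nn \<mu> where "is_rcd M X n Nn \<mu>"
      and "\<forall>x\<in>Nn. associated (\<mu> x) (\<lambda>p. p) \<and> st_le (\<mu> x) snd fst"
      using d by (meson False less_one not_le)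
    then show ?thesis by (rule conditional_step[OF T a X X_nn])
  qed
  then show ?thesis
    unfolding disc_DFR_def prob_counting_ge[OF X X_nn T assms(5,6)] by simp
qed

end
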